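(* Let $d\geq1$ be an integer, $j\in\{0,\dots,d-1\}$, $\beta>0$, and let $\kappa,\Delta,\gamma,\delta>0$ satisfy $$\kappa^2=\frac{\gamma^2}{\lambda(\gamma,\delta)}=\tanh\beta,\qquad \Delta^2=\frac{\delta^2}{\lambda(\gamma,\delta)}\Big(1-\frac{\gamma^2\delta^2}{2\lambda(\gamma,\delta)}\Big)^{-2}=\sinh\beta\cosh\beta,\qquad \gamma^2=\delta^2=2\tanh\frac{\beta}{2},$$ where $\lambda(\gamma,\delta)=1+\frac{\gamma^2\delta^2}{4}$. Then $$\hat S\big(\ln\sqrt{1+\kappa^2\Delta^2}\big)|j^{(1)}_{\kappa,\Delta}\rangle=|j^{(2)}_{\gamma,\delta}\rangle=|j^{(3)}_\beta\rangle.$$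
   Context: Units $\hbar=1$. $\hat q,\hat p$ are the canonical position and momentum operators of a single bosonic mode, $[\hat q,\hat p]=i$; $|q\rangle_{\hat q}$ are generalized position eigenstates with ${}_{\hat q}\langle q|q'\rangle_{\hat q}=\delta(q-q')$. $\hat a=(\hat q+i\hat p)/\sqrt2$, $\hat n=\hat a^\dagger\hat a$, $|0\rangle_f$ is the vacuum with ${}_{\hat q}\langle q|0\rangle_f=\pi^{-1/4}e^{-q^2/2}$. $\hat X(r)=e^{-ir\hat p}$, $\hat Z(r)=e^{ir\hat q}$, $\hat V(\mathbf r)=e^{-ir_pr_q/2}\hat Z(r_p)\hat X(r_q)$ for $\mathbf r=(r_p,r_q)$. Squeezing operator $\hat S(\xi)=\exp(i\xi(\hat q\hat p+\hat p\hat q)/2)$ ($\xi\in\mathbb R$), which satisfies $\hat S^\dagger(\xi)\hat q\hat S(\xi)=e^{-\xi}\hat q$, $\hat S^\dagger(\xi)\hat p\hat S(\xi)=e^{\xi}\hat p$. With $\alpha_d=\sqrt{2\pi/d}$: ideal GKP state $|j^{(\mathrm{ideal})}\rangle=\sqrt{\alpha_d d}\sum_{s\in\mathbb Z}|\alpha_d(ds+j)\rangle_{\hat q}$ (non-normalizable). Approximate GKP states: $|j^{(1)}_{\kappa,\Delta}\rangle=(N^{(1)}_{\kappa,\Delta,j})^{-1/2}\sum_{s\in\mathbb Z}e^{-\frac12\kappa^2\alpha_d^2(ds+j)^2}\hat X(\alpha_d(ds+j))\hat S(-\ln\Delta)|0\rangle_f$ ($\kappa,\Delta>0$); $|j^{(2)}_{\gamma,\delta}\rangle=(N^{(2)}_{\gamma,\delta,j})^{-1/2}\iint\frac{dr_1dr_2}{2\pi\gamma\delta}e^{-\frac{r_1^2}{2\gamma^2}-\frac{r_2^2}{2\delta^2}}\hat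 V((r_1,r_2))|j^{(\mathrm{ideal})}\rangle$ ($0<\gamma\delta<2$); $|j^{(3)}_\beta\rangle=(N^{(3)}_{\beta,j})^{-1/2}e^{-\beta(\hat n+1/2)}|j^{(\mathrm{ideal})}\rangle$ ($\beta>0$); where each $N^{(\cdot)}>0$ is the constant making the state unit-norm. *)

theory Defs
  imports "HOL-Analysis.Analysis"
begin

text \<open>Single bosonic mode, hbar = 1. States are represented by their position-space
wavefunctions psi(q) = <q|psi>, i.e. functions real => complex.  Two states are equal
iff their wavefunctions agree (all wavefunctions here are continuous).\<close>

type_synonym wavefun = "real \<Rightarrow> complex"

definition alpha_d :: "nat \<Rightarrow> real" where
  "alpha_d d = sqrt (2 * pi / real d)"

definition gkp_pt :: "nat \<Rightarrow> nat \<Rightarrow> int \<Rightarrow> real" where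
  "gkp_pt d j s = alpha_d d * (real d * real_of_int s + real j)"

definition vac :: wavefun where
  "vac q = complex_of_real (pi powr (-1/4) * exp (- q\<^sup>2 / 2))"

text \<open>Position shift X(r) = exp(-i r p): (X(r) psi)(q) = psi(q - r).\<close>
definition shiftX :: "real \<Rightarrow> wavefun \<Rightarrow> wavefun" where
  "shiftX r psi = (\<lambda>q. psi (q - r))"

text \<open>Squeezing S(xi) = exp(i xi (qp+pq)/2): (S(xi) psi)(q) = e^{xi/2} psi(e^xi q),
  so that S^dagger q S = e^{-xi} q and S^dagger p S = e^{xi} p.\<close>
definition squeeze :: "real \<Rightarrow> wavefun \<Rightarrow> wavefun" where
  "squeeze xi psi = (\<lambda>q. complex_of_real (exp (xi / 2)) * psi (exp xi * q))"

definition normalize_wf :: "wavefun \<Rightarrow> wavefun" where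
  "normalize_wf psi =
     (\<lambda>q. psi q / complex_of_real (sqrt (LINT x|lborel. (cmod (psi x))\<^sup>2)))"

text \<open>Applying an operator with position kernel K(q,x) = <q|O|x> to the ideal GKP state
  sqrt(alpha_d d) sum_s |alpha_d (d s + j)>.\<close>
definition apply_to_ideal :: "(real \<Rightarrow> real \<Rightarrow> complex) \<Rightarrow> nat \<Rightarrow> nat \<Rightarrow> wavefun" where
  "apply_to_ideal K d j =
     (\<lambda>q. complex_of_real (sqrt (alpha_d d * real d)) * infsum (\<lambda>s::int. K q (gkp_pt d j s)) UNIV)"

text \<open>Position kernel of the smeared displacement  integral f(r_p,r_q) V((r_p,r_q)) dr_p dr_q,
  with V(r) = e^{-i r_p r_q/2} Z(r_p) X(r_q):  <q|V(r)|x> = e^{-i r_p r_q/2} e^{i r_p q} delta(q - x - r_q);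
  the r_q integral against the delta function is carried out (r_q = q - x).\<close>
definition smeared_disp_kernel :: "(real \<Rightarrow> real \<Rightarrow> complex) \<Rightarrow> real \<Rightarrow> real \<Rightarrow> complex" where
  "smeared_disp_kernel f q x =
     (LINT rp|lborel. f rp (q - x) * cis (- rp * (q - x) / 2) * cis (rp * q))"

text \<open>Hermite polynomials and Hermite functions <q|n> (eigenfunctions of n = a^dagger a).\<close>
fun hermite :: "nat \<Rightarrow> real \<Rightarrow> real" where
  "hermite 0 x = 1"
| "hermite (Suc 0) x = 2 * x"
| "hermite (Suc (Suc n)) x = 2 * x * hermite (Suc n) x - 2 * real (Suc n) * hermite n x"

definition hermite_fun :: "nat \<Rightarrow> real \<Rightarrow> real" where
  "hermite_fun n x = hermite n x * exp (- x\<^sup>2 / 2) / sqrt (2 ^ n * fact n * sqrt pi)"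

text \<open>Position kernel of exp(-beta (n + 1/2)) via its spectral decomposition.\<close>
definition number_exp_kernel :: "real \<Rightarrow> real \<Rightarrow> real \<Rightarrow> complex" where
  "number_exp_kernel \<beta> q x =
     complex_of_real (\<Sum>n. exp (- \<beta> * (real n + 1/2)) * hermite_fun n q * hermite_fun n x)"

definition gkp1 :: "nat \<Rightarrow> nat \<Rightarrow> real \<Rightarrow> real \<Rightarrow> wavefun" where
  "gkp1 d j \<kappa> \<Delta> = normalize_wf (\<lambda>q. infsum (\<lambda>s::int.
      complex_of_real (exp (- (\<kappa>\<^sup>2 * (gkp_pt d j s)\<^sup>2) / 2))
      * shiftX (gkp_pt d j s) (squeeze (- ln \<Delta>) vac) q) UNIV)"

definition gkp2 :: "nat \<Rightarrow> nat \<Rightarrow> real \<Rightarrow> real \<Rightarrow> wavefun" where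
  "gkp2 d j \<gamma> \<delta> = normalize_wf (apply_to_ideal (smeared_disp_kernel
      (\<lambda>r1 r2. complex_of_real (exp (- r1\<^sup>2 / (2 * \<gamma>\<^sup>2) - r2\<^sup>2 / (2 * \<delta>\<^sup>2)) / (2 * pi * \<gamma> * \<delta>)))) d j)"

definition gkp3 :: "nat \<Rightarrow> nat \<Rightarrow> real \<Rightarrow> wavefun" where
  "gkp3 d j \<beta> = normalize_wf (apply_to_ideal (number_exp_kernel \<beta>) d j)"

definition lam :: "real \<Rightarrow> real \<Rightarrow> real" where
  "lam \<gamma> \<delta> = 1 + \<gamma>\<^sup>2 * \<delta>\<^sup>2 / 4"

end

(*
  All three states are, up to positive factors that normalisation removes, the same
  Gaussian comb  q \<mapsto> \<Sum>_s K(q, x_s)  over the GKP points  x_s = \<alpha>_d (d s + j),  where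
  K(q, x) = exp (-(coth \<beta>) (q\<^sup>2 + x\<^sup>2)/2 + q x / sinh \<beta>)  is the Mehler kernel.

  For |j^(3)> this is Mehler's formula for the position kernel of exp (-\<beta> (n + 1/2)).
  It is derived from the representation  H_n(y) = E (2y + i \<surd>2 U)^n  of the Hermite
  polynomials (U standard normal, proved via Stein's identity): the Hermite generating function
  and then Mehler's sum are obtained by exchanging sum and expectation (dominated convergence)
  and evaluating a complex Gaussian integral.
  For |j^(2)> the smeared displacement has a Gaussian kernel by a Gaussian Fourier integral,
  and for |j^(1)> squeezing by  cosh \<beta> = sqrt (1 + \<kappa>\<^sup>2 \<Delta>\<^sup>2)  turns its comb of
  displaced squeezed vacua into the same kernel.  The parameter relations of the theorem are
  exactly what makes the three quadratic forms coincide.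
*)
theory Submission
  imports Defs "HOL-Probability.Characteristic_Functions"
begin

abbreviation \<phi> :: "real \<Rightarrow> real" where "\<phi> \<equiv> std_normal_density"

section \<open>Gaussian integrals\<close>

lemma integral_exp_gaussian:
  fixes a :: real and c :: complex
  assumes a: "a > 0"
  shows "(LINT u|lborel. exp (c * of_real u - of_real (a * u\<^sup>2)))
       = of_real (sqrt (pi / a)) * exp (c\<^sup>2 / of_real (4 * a))"
proof -
  define s where "s = 1 / sqrt (2 * a)"
  define m where "m = Re c / (2 * a)"
  define C where "C = c * of_real m - of_real (a * m\<^sup>2)"
  have s: "s > 0" "s\<^sup>2 = 1 / (2 * a)" "s * sqrt (2 * pi) = sqrt (pi / a)"
    using a by (auto simp: s_def power_divide power_mult_distrib real_sqrt_divide real_sqrt_mult)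
  \<comment> \<open>completing the square: the real part of \<open>c\<close> shifts the Gaussian, the imaginary part is a Fourier frequency\<close>
  have affine: "exp (c * of_real (m + s * v) - of_real (a * (m + s * v)\<^sup>2))
      = (of_real (sqrt (2 * pi)) * exp C) * (\<phi> v *\<^sub>R iexp (Im c * s * v))" for v
  proof -
    have "c * of_real (m + s * v) - of_real (a * (m + s * v)\<^sup>2)
        = C + \<i> * of_real (Im c * s * v) + of_real (- v\<^sup>2 / 2)"
      using a s(2) by (simp add: complex_eq_iff C_def m_def power2_eq_square field_simps)
    then have "exp (c * of_real (m + s * v) - of_real (a * (m + s * v)\<^sup>2))
        = exp C * iexp (Im c * s * v) * of_real (exp (- v\<^sup>2 / 2))"
      by (simp only: exp_add exp_of_real)
    then show ?thesis
      by (simp add: std_normal_density_def scaleR_conv_of_real)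
  qed
  have "(LINT u|lborel. exp (c * of_real u - of_real (a * u\<^sup>2)))
      = s *\<^sub>R (LINT v|lborel. exp (c * of_real (m + s * v) - of_real (a * (m + s * v)\<^sup>2)))"
    using lborel_integral_real_affine[of s "\<lambda>u. exp (c * of_real u - of_real (a * u\<^sup>2))" m] s(1)
    by simp
  also have "\<dots> = s *\<^sub>R ((of_real (sqrt (2 * pi)) * exp C) * char std_normal_distribution (Im c * s))"
    unfolding affine integral_mult_right_zero char_def
    by (subst integral_density) (auto simp: mult_ac)
  also have "\<dots> = of_real (sqrt (pi / a)) * (exp C * of_real (exp (- (Im c * s)\<^sup>2 / 2)))"
    by (simp add: char_std_normal_distribution scaleR_conv_of_real s(3)[symmetric])
  also have "exp C * of_real (exp (- (Im c * s)\<^sup>2 / 2)) = exp (c\<^sup>2 / of_real (4 * a))"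
    unfolding exp_of_real[symmetric] exp_add[symmetric] using a s(2)
    by (intro arg_cong[where f = exp]) (simp add: complex_eq_iff C_def m_def power2_eq_square field_simps)
  finally show ?thesis .
qed

lemma integrable_exp_abs_minus_quadratic:
  fixes a b :: real
  assumes a: "a > 0"
  shows "integrable lborel (\<lambda>u. exp (b * \<bar>u\<bar> - a * u\<^sup>2))"
proof (rule Bochner_Integration.integrable_bound)
  define s where "s = 1 / sqrt a"
  have "exp (- (a / 2) * u\<^sup>2) = sqrt (2 * pi / a) * normal_density 0 s u" for u
    using a by (simp add: s_def normal_density_def power_divide real_sqrt_divide real_sqrt_mult)
  then show "integrable lborel (\<lambda>u. exp (b\<^sup>2 / (2 * a)) * exp (- (a / 2) * u\<^sup>2))"
    using a by (simp add: s_def)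
  show "(\<lambda>u. exp (b * \<bar>u\<bar> - a * u\<^sup>2)) \<in> borel_measurable lborel"
    by measurable
  show "AE u in lborel. norm (exp (b * \<bar>u\<bar> - a * u\<^sup>2)) \<le> norm (exp (b\<^sup>2 / (2 * a)) * exp (- (a / 2) * u\<^sup>2))"
  proof (rule AE_I2)
    fix u :: real
    \<comment> \<open>\<open>b |u| \<le> b\<^sup>2/(2a) + a u\<^sup>2/2\<close> by AM-GM\<close>
    have "0 \<le> (a / 2) * (\<bar>u\<bar> - b / a)\<^sup>2"
      using a by simp
    also have "\<dots> = b\<^sup>2 / (2 * a) + (- (a / 2) * u\<^sup>2) - (b * \<bar>u\<bar> - a * u\<^sup>2)"
      using a by (simp add: power2_eq_square field_simps)
    finally show "norm (exp (b * \<bar>u\<bar> - a * u\<^sup>2)) \<le> norm (exp (b\<^sup>2 / (2 * a)) * exp (- (a / 2) * u\<^sup>2))"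
      by (simp flip: exp_add)
  qed
qed

lemma std_normal_density_exp:
  "\<phi> u * exp (b * u) = exp (b\<^sup>2 / 2) * normal_density b 1 u"
  by (simp add: normal_density_def std_normal_density_def mult_exp_exp power2_eq_square field_simps)

lemma std_normal_density_mult_exp:
  "\<phi> u * exp a = 1 / sqrt (2 * pi) * exp (a - 1 / 2 * u\<^sup>2)"
  by (simp add: normal_density_def mult_exp_exp algebra_simps)

lemma std_normal_density_scaleR_exp:
  fixes z :: complex
  shows "\<phi> u *\<^sub>R exp z = of_real (1 / sqrt (2 * pi)) * exp (z - of_real (1 / 2 * u\<^sup>2))"
proof -
  have "(of_real (\<phi> u) :: complex) = of_real (1 / sqrt (2 * pi)) * exp (- of_real (1 / 2 * u\<^sup>2))"
    by (simp add: std_normal_density_def exp_of_real[symmetric])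
  moreover have "exp (z - of_real (1 / 2 * u\<^sup>2)) = exp (- of_real (1 / 2 * u\<^sup>2)) * exp z"
    by (simp only: exp_diff exp_minus divide_inverse mult.commute)
  ultimately show ?thesis
    by (simp only: scaleR_conv_of_real mult.assoc)
qed

lemma integrable_std_normal_exp_abs: "integrable lborel (\<lambda>u. \<phi> u * exp (c * \<bar>u\<bar>))"
  unfolding std_normal_density_mult_exp
  by (intro integrable_mult_right integrable_exp_abs_minus_quadratic) simp

lemma integral_std_normal_exp_abs_le:
  "(LINT u|lborel. \<phi> u * exp (c * \<bar>u\<bar>)) \<le> 2 * exp (c\<^sup>2 / 2)"
proof -
  have int: "integrable lborel (\<lambda>u. \<phi> u * exp (b * u))" for b
    unfolding std_normal_density_exp by simp
  have int_eq: "(LINT u|lborel. \<phi> u * exp (b * u)) = exp (b\<^sup>2 / 2)" for b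
    unfolding std_normal_density_exp by simp
  have exp_abs: "\<phi> u * exp (c * \<bar>u\<bar>) \<le> \<phi> u * exp (c * u) + \<phi> u * exp ((- c) * u)" for u
  proof -
    have "exp (c * \<bar>u\<bar>) \<le> exp (c * u) + exp ((- c) * u)"
    proof (cases "u \<ge> 0")
      case True
      then show ?thesis using exp_gt_zero[of "(- c) * u"] by simp
    next
      case False
      then show ?thesis using exp_gt_zero[of "c * u"] by simp
    qed
    moreover have "0 \<le> \<phi> u"
      by simp
    ultimately show ?thesis
      by (simp only: mult_left_mono flip: distrib_left)
  qed
  have "(LINT u|lborel. \<phi> u * exp (c * \<bar>u\<bar>))
      \<le> (LINT u|lborel. \<phi> u * exp (c * u) + \<phi> u * exp ((- c) * u))"
    by (intro integral_mono Bochner_Integration.integrable_add int integrable_std_normal_exp_abs exp_abs)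
  also have "\<dots> = 2 * exp (c\<^sup>2 / 2)"
    using int[of c] int[of "- c"] int_eq[of c] int_eq[of "- c"] by simp
  finally show ?thesis .
qed

lemma sums_integral_dominated:
  fixes f :: "nat \<Rightarrow> 'a \<Rightarrow> 'b::{banach, second_countable_topology}"
  assumes f: "\<And>n. integrable M (f n)" and W: "integrable M W"
    and bound: "\<And>x N. x \<in> space M \<Longrightarrow> norm (\<Sum>n<N. f n x) \<le> W x"
    and sums: "\<And>x. x \<in> space M \<Longrightarrow> (\<lambda>n. f n x) sums F x"
  shows "(\<lambda>n. integral\<^sup>L M (f n)) sums integral\<^sup>L M F"
proof -
  have partial: "(\<lambda>x. \<Sum>n<N. f n x) \<in> borel_measurable M" for N
    using f by (intro borel_measurable_sum borel_measurable_integrable)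
  have "F \<in> borel_measurable M"
    by (rule borel_measurable_LIMSEQ_metric[where f = "\<lambda>N x. \<Sum>n<N. f n x", OF partial])
      (use sums in \<open>simp add: sums_def\<close>)
  then have "(\<lambda>N. integral\<^sup>L M (\<lambda>x. \<Sum>n<N. f n x)) \<longlonglongrightarrow> integral\<^sup>L M F"
    using partial W by (rule integral_dominated_convergence) (auto simp: bound sums[unfolded sums_def])
  then show ?thesis
    using f by (simp add: sums_def)
qed

lemma norm_exp_partial_sum_le:
  fixes z :: "'a::{real_normed_algebra_1, banach}"
  shows "norm (\<Sum>n<N. z ^ n /\<^sub>R fact n) \<le> exp (norm z)"
proof -
  have "norm (\<Sum>n<N. z ^ n /\<^sub>R fact n) \<le> (\<Sum>n<N. norm (z ^ n /\<^sub>R fact n))"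
    by (rule norm_sum)
  also have "\<dots> \<le> (\<Sum>n<N. norm z ^ n /\<^sub>R fact n)"
    by (intro sum_mono) (simp add: norm_power_ineq divide_right_mono)
  also have "\<dots> \<le> (\<Sum>n. norm z ^ n /\<^sub>R fact n)"
    by (rule sum_le_suminf) (use exp_converges[of "norm z"] in \<open>auto simp: sums_iff\<close>)
  also have "\<dots> = exp (norm z)"
    using exp_converges[of "norm z"] by (simp add: sums_iff)
  finally show ?thesis .
qed

section \<open>Hermite polynomials as Gaussian moments\<close>

lemma integral_std_normal_moment_Suc_Suc:
  "(LINT u|lborel. \<phi> u * u ^ Suc (Suc m)) = (real m + 1) * (LINT u|lborel. \<phi> u * u ^ m)"
proof (cases "even m")
  case True
  then obtain k where k: "m = 2 * k" by (auto elim: evenE)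
  have "Suc (Suc m) = 2 * Suc k" using k by simp
  then have "(LINT u|lborel. \<phi> u * u ^ Suc (Suc m)) = fact (2 * Suc k) / (2 ^ Suc k * fact (Suc k))"
    by (simp only: integral_std_normal_moment_even)
  also have "\<dots> = ((2 * real k + 1) * fact (2 * k)) * (2 * (real k + 1)) / ((2 ^ k * fact k) * (2 * (real k + 1)))"
  proof -
    have "(fact (2 * Suc k) :: real) = 2 * (real k + 1) * ((2 * real k + 1) * fact (2 * k))"
      by (simp add: algebra_simps)
    moreover have "(fact (Suc k) :: real) = (real k + 1) * fact k"
      by (simp add: algebra_simps)
    ultimately show ?thesis by (simp only: power_Suc mult_ac)
  qed
  also have "\<dots> = (real m + 1) * (LINT u|lborel. \<phi> u * u ^ m)"
    by (simp add: k integral_std_normal_moment_even add_nonneg_pos)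
  finally show ?thesis .
next
  case False
  then obtain k where k: "m = 2 * k + 1" by (auto elim: oddE)
  have "Suc (Suc m) = 2 * Suc k + 1" using k by simp
  then show ?thesis by (simp only: k integral_std_normal_moment_odd)
qed

text \<open>The Hermite polynomials are the moments \<open>H\<^sub>n(y) = E (2y + i\<surd>2 U)\<^sup>n\<close> of a standard
  normal \<open>U\<close>.\<close>
definition hermite_var :: "real \<Rightarrow> real \<Rightarrow> complex" where
  "hermite_var y u = of_real (2 * y) + \<i> * of_real (sqrt 2 * u)"

definition hermite_moment :: "real \<Rightarrow> nat \<Rightarrow> nat \<Rightarrow> complex" where
  "hermite_moment y m n = (LINT u|lborel. \<phi> u *\<^sub>R (of_real u ^ m * hermite_var y u ^ n))"

lemma hermite_var_Suc:
  "\<phi> u *\<^sub>R (of_real u ^ m * hermite_var y u ^ Suc n)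
   = of_real (2 * y) * (\<phi> u *\<^sub>R (of_real u ^ m * hermite_var y u ^ n))
     + \<i> * of_real (sqrt 2) * (\<phi> u *\<^sub>R (of_real u ^ Suc m * hermite_var y u ^ n))"
  unfolding hermite_var_def scaleR_conv_of_real by (simp add: algebra_simps)

lemma integrable_hermite_moment:
  "integrable lborel (\<lambda>u. \<phi> u *\<^sub>R (of_real u ^ m * hermite_var y u ^ n))"
proof (induction n arbitrary: m)
  case 0
  have "integrable lborel (\<lambda>u. complex_of_real (\<phi> u * u ^ m))"
    by (intro integrable_of_real integrable_std_normal_moment)
  then show ?case by (simp add: scaleR_conv_of_real)
next
  case (Suc n)
  then show ?case
    unfolding hermite_var_Suc by (intro Bochner_Integration.integrable_add integrable_mult_right)
qed

lemma hermite_moment_0: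
  "hermite_moment y m 0 = of_real (LINT u|lborel. \<phi> u * u ^ m)"
  by (simp add: hermite_moment_def scaleR_conv_of_real flip: integral_complex_of_real)

lemma hermite_moment_Suc:
  "hermite_moment y m (Suc n)
   = of_real (2 * y) * hermite_moment y m n + \<i> * of_real (sqrt 2) * hermite_moment y (Suc m) n"
  unfolding hermite_moment_def hermite_var_Suc
  by (simp only: Bochner_Integration.integral_add integral_mult_right_zero
      integrable_mult_right integrable_hermite_moment)

text \<open>Stein's identity \<open>E[U f(U)] = E[f'(U)]\<close> for \<open>f u = u^m (2y + i\<surd>2 u)^n\<close>;
  at \<open>m = 0\<close> or \<open>n = 0\<close> the truncated subtraction is harmless since its coefficient vanishes.\<close>
lemma hermite_moment_stein:
  "hermite_moment y (Suc m) n
   = of_nat m * hermite_moment y (m - 1) n + \<i> * of_real (sqrt 2) * of_nat n * hermite_moment y m (n - 1)"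
proof (induction n arbitrary: m)
  case 0
  show ?case
  proof (cases m)
    case 0
    then show ?thesis
      using integral_std_normal_moment_odd[of 0] by (simp add: hermite_moment_0)
  next
    case (Suc k)
    then show ?thesis
      by (simp only: hermite_moment_0 integral_std_normal_moment_Suc_Suc) simp
  qed
next
  case (Suc n)
  have sqrt2: "of_real (sqrt 2) * of_real (sqrt 2) = (2 :: complex)"
    by (simp flip: of_real_mult)
  have m: "of_nat m * hermite_moment y (m - 1) (Suc n)
     = of_nat m * (of_real (2 * y) * hermite_moment y (m - 1) n + \<i> * of_real (sqrt 2) * hermite_moment y m n)"
    by (cases m) (simp_all add: hermite_moment_Suc)
  have n: "of_nat n * hermite_moment y m n
     = of_nat n * (of_real (2 * y) * hermite_moment y m (n - 1) + \<i> * of_real (sqrt 2) * hermite_moment y (Suc m) (n - 1))"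
    by (cases n) (simp_all add: hermite_moment_Suc)
  have ii: "\<i> * \<i> = (-1 :: complex)"
    by simp
  show ?case
    unfolding hermite_moment_Suc[of y "Suc m"] Suc.IH m of_nat_Suc diff_Suc_1
    using n sqrt2 ii by algebra
qed

lemma hermite_eq_moment: "of_real (hermite n y) = hermite_moment y 0 n"
proof (induction n y rule: hermite.induct)
  case 1
  then show ?case by (simp add: hermite_moment_0)
next
  case 2
  then show ?case
    using integral_std_normal_moment_odd[of 0]
    by (simp add: hermite_moment_Suc hermite_moment_0)
next
  case (3 n y)
  have sqrt2: "of_real (sqrt 2) * of_real (sqrt 2) = (2 :: complex)"
    by (simp flip: of_real_mult)
  show ?case
    using 3 hermite_moment_Suc[of y 0 "Suc n"] hermite_moment_stein[of y 0 "Suc n"] sqrt2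
    by (simp add: algebra_simps)
qed

lemma norm_hermite_var_le: "norm (hermite_var y u) \<le> 2 * \<bar>y\<bar> + sqrt 2 * \<bar>u\<bar>"
  unfolding hermite_var_def
  using norm_triangle_ineq[of "of_real (2 * y)" "\<i> * of_real (sqrt 2 * u)"]
  by (simp add: abs_mult norm_mult)

lemma hermite_term_eq:
  fixes t :: complex
  shows "\<phi> u *\<^sub>R ((t * hermite_var y u) ^ n /\<^sub>R fact n)
   = (t ^ n /\<^sub>R fact n) * (\<phi> u *\<^sub>R (of_real u ^ 0 * hermite_var y u ^ n))"
  by (simp add: scaleR_conv_of_real algebra_simps)

lemma integrable_hermite_term:
  fixes t :: complex
  shows "integrable lborel (\<lambda>u. \<phi> u *\<^sub>R ((t * hermite_var y u) ^ n /\<^sub>R fact n))"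
  unfolding hermite_term_eq by (intro integrable_mult_right integrable_hermite_moment)

lemma integral_hermite_term:
  fixes t :: complex
  shows "(LINT u|lborel. \<phi> u *\<^sub>R ((t * hermite_var y u) ^ n /\<^sub>R fact n)) = (t ^ n * of_real (hermite n y)) /\<^sub>R fact n"
  unfolding hermite_term_eq integral_mult_right_zero hermite_moment_def[symmetric] hermite_eq_moment
  by (simp add: scaleR_conv_of_real)

lemma norm_hermite_partial_sum_integrand_le:
  fixes t :: complex
  shows "norm (\<Sum>n<N. \<phi> u *\<^sub>R ((t * hermite_var y u) ^ n /\<^sub>R fact n))
   \<le> exp (2 * \<bar>y\<bar> * norm t) * (\<phi> u * exp (sqrt 2 * norm t * \<bar>u\<bar>))"
proof -
  have "norm (\<Sum>n<N. \<phi> u *\<^sub>R ((t * hermite_var y u) ^ n /\<^sub>R fact n))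
      = \<phi> u * norm (\<Sum>n<N. (t * hermite_var y u) ^ n /\<^sub>R fact n)"
    unfolding scaleR_sum_right[symmetric] norm_scaleR by simp
  also have "\<dots> \<le> \<phi> u * exp (norm t * (2 * \<bar>y\<bar> + sqrt 2 * \<bar>u\<bar>))"
  proof (intro mult_left_mono order_trans[OF norm_exp_partial_sum_le])
    show "exp (norm (t * hermite_var y u)) \<le> exp (norm t * (2 * \<bar>y\<bar> + sqrt 2 * \<bar>u\<bar>))"
      by (simp add: norm_mult mult_left_mono norm_hermite_var_le)
  qed simp
  also have "\<dots> = exp (2 * \<bar>y\<bar> * norm t) * (\<phi> u * exp (sqrt 2 * norm t * \<bar>u\<bar>))"
    by (simp add: algebra_simps flip: exp_add)
  finally show ?thesis .
qed

lemma integrable_hermite_dominant: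
  fixes t :: complex
  shows "integrable lborel (\<lambda>u. exp (2 * \<bar>y\<bar> * norm t) * (\<phi> u * exp (sqrt 2 * norm t * \<bar>u\<bar>)))"
  by (intro integrable_mult_right integrable_std_normal_exp_abs)

lemma hermite_generating_function:
  fixes t :: complex
  shows "(\<lambda>n. (t ^ n * of_real (hermite n y)) /\<^sub>R fact n) sums exp (2 * of_real y * t - t\<^sup>2)"
proof -
  define c where "c = \<i> * of_real (sqrt 2) * t"
  have integrand: "\<phi> u *\<^sub>R exp (t * hermite_var y u)
      = of_real (1 / sqrt (2 * pi)) * exp (2 * of_real y * t) * exp (c * of_real u - of_real (1 / 2 * u\<^sup>2))" for u
  proof -
    have "t * hermite_var y u - of_real (1 / 2 * u\<^sup>2) = 2 * of_real y * t + (c * of_real u - of_real (1 / 2 * u\<^sup>2))"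
      by (simp add: hermite_var_def c_def algebra_simps)
    then show ?thesis
      by (simp only: std_normal_density_scaleR_exp exp_add mult.assoc)
  qed
  have "(\<lambda>n. LINT u|lborel. \<phi> u *\<^sub>R ((t * hermite_var y u) ^ n /\<^sub>R fact n))
      sums (LINT u|lborel. \<phi> u *\<^sub>R exp (t * hermite_var y u))"
    using integrable_hermite_term integrable_hermite_dominant norm_hermite_partial_sum_integrand_le
    by (rule sums_integral_dominated) (intro sums_scaleR_right exp_converges)
  also have "(LINT u|lborel. \<phi> u *\<^sub>R exp (t * hermite_var y u))
      = of_real (1 / sqrt (2 * pi)) * exp (2 * of_real y * t) * (of_real (sqrt (pi / (1 / 2))) * exp (c\<^sup>2 / of_real (4 * (1 / 2))))"
    unfolding integrand integral_mult_right_zero by (subst integral_exp_gaussian) simp_all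
  also have "\<dots> = exp (2 * of_real y * t - t\<^sup>2)"
  proof -
    have "c\<^sup>2 / of_real (4 * (1 / 2)) = - t\<^sup>2"
      by (simp add: c_def power_mult_distrib flip: of_real_power)
    moreover have "of_real (1 / sqrt (2 * pi)) * of_real (sqrt (pi / (1 / 2))) = (1 :: complex)"
      by (simp flip: of_real_mult)
    ultimately show ?thesis
      by (simp add: exp_diff exp_minus field_simps)
  qed
  finally show ?thesis
    unfolding integral_hermite_term .
qed

lemma norm_hermite_partial_sum_le:
  fixes t :: complex
  shows "norm (\<Sum>n<N. (t ^ n * of_real (hermite n y)) /\<^sub>R fact n) \<le> 2 * exp (2 * \<bar>y\<bar> * norm t + (norm t)\<^sup>2)"
proof -
  have "norm (\<Sum>n<N. (t ^ n * of_real (hermite n y)) /\<^sub>R fact n)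
      = norm (LINT u|lborel. (\<Sum>n<N. \<phi> u *\<^sub>R ((t * hermite_var y u) ^ n /\<^sub>R fact n)))"
    by (subst Bochner_Integration.integral_sum) (simp_all only: integrable_hermite_term integral_hermite_term)
  also have "\<dots> \<le> (LINT u|lborel. exp (2 * \<bar>y\<bar> * norm t) * (\<phi> u * exp (sqrt 2 * norm t * \<bar>u\<bar>)))"
    by (intro Bochner_Integration.integral_norm_bound_integral Bochner_Integration.integrable_sum
        integrable_hermite_term integrable_hermite_dominant norm_hermite_partial_sum_integrand_le)
  also have "\<dots> \<le> exp (2 * \<bar>y\<bar> * norm t) * (2 * exp ((sqrt 2 * norm t)\<^sup>2 / 2))"
    by (simp add: integral_std_normal_exp_abs_le)
  also have "\<dots> = 2 * exp (2 * \<bar>y\<bar> * norm t + (norm t)\<^sup>2)"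
    by (simp add: algebra_simps flip: exp_add)
  finally show ?thesis .
qed

section \<open>Mehler's formula\<close>

text \<open>Since \<open>E (mehler_var w x U)\<^sup>n = (w/2)\<^sup>n H\<^sub>n(x)\<close>, averaging the generating function of
  \<open>H\<^sub>n(y)\<close> at \<open>mehler_var w x U\<close> yields Mehler's sum.\<close>
definition mehler_var :: "real \<Rightarrow> real \<Rightarrow> real \<Rightarrow> complex" where
  "mehler_var w x u = of_real (w / 2) * hermite_var x u"

lemma mehler_term_eq:
  "\<phi> u *\<^sub>R ((mehler_var w x u ^ n * of_real (hermite n y)) /\<^sub>R fact n)
   = of_real ((w / 2) ^ n * hermite n y / fact n) * (\<phi> u *\<^sub>R (of_real u ^ 0 * hermite_var x u ^ n))"
  by (simp add: mehler_var_def scaleR_conv_of_real field_simps)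

lemma integrable_mehler_term:
  "integrable lborel (\<lambda>u. \<phi> u *\<^sub>R ((mehler_var w x u ^ n * of_real (hermite n y)) /\<^sub>R fact n))"
  unfolding mehler_term_eq by (intro integrable_mult_right integrable_hermite_moment)

lemma integral_mehler_term:
  "(LINT u|lborel. \<phi> u *\<^sub>R ((mehler_var w x u ^ n * of_real (hermite n y)) /\<^sub>R fact n))
   = of_real ((w / 2) ^ n / fact n * hermite n x * hermite n y)"
  unfolding mehler_term_eq integral_mult_right_zero hermite_moment_def[symmetric] hermite_eq_moment[symmetric]
  by (simp flip: of_real_mult)

lemma norm_mehler_var_le: "norm (mehler_var w x u) \<le> \<bar>w\<bar> * (\<bar>x\<bar> + \<bar>u\<bar>)"
proof -
  have "sqrt 2 \<le> (2 :: real)"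
    using real_sqrt_le_mono[of 2 4] by simp
  then have "sqrt 2 * \<bar>u\<bar> \<le> 2 * \<bar>u\<bar>"
    by (intro mult_right_mono) auto
  have "norm (mehler_var w x u) \<le> (\<bar>w\<bar> / 2) * (2 * \<bar>x\<bar> + sqrt 2 * \<bar>u\<bar>)"
    unfolding mehler_var_def norm_mult by (intro mult_mono norm_hermite_var_le) auto
  also have "\<dots> \<le> (\<bar>w\<bar> / 2) * (2 * \<bar>x\<bar> + 2 * \<bar>u\<bar>)"
    using \<open>sqrt 2 * \<bar>u\<bar> \<le> 2 * \<bar>u\<bar>\<close> by (intro mult_left_mono) auto
  finally show ?thesis
    by (simp add: algebra_simps)
qed

lemma norm_mehler_var_sq: "(norm (mehler_var w x u))\<^sup>2 = w\<^sup>2 * (x\<^sup>2 + u\<^sup>2 / 2)"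
  by (simp add: mehler_var_def hermite_var_def norm_mult power_mult_distrib cmod_power2 power_divide)

lemma norm_mehler_partial_sum_le:
  "norm (\<Sum>n<N. \<phi> u *\<^sub>R ((mehler_var w x u ^ n * of_real (hermite n y)) /\<^sub>R fact n))
   \<le> 2 / sqrt (2 * pi) * exp (2 * \<bar>y\<bar> * \<bar>w\<bar> * \<bar>x\<bar> + w\<^sup>2 * x\<^sup>2)
       * exp (2 * \<bar>y\<bar> * \<bar>w\<bar> * \<bar>u\<bar> - (1 - w\<^sup>2) / 2 * u\<^sup>2)"
proof -
  let ?s = "mehler_var w x u"
  have "norm (\<Sum>n<N. \<phi> u *\<^sub>R ((?s ^ n * of_real (hermite n y)) /\<^sub>R fact n))
      = \<phi> u * norm (\<Sum>n<N. (?s ^ n * of_real (hermite n y)) /\<^sub>R fact n)"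
    unfolding scaleR_sum_right[symmetric] norm_scaleR by simp
  also have "\<dots> \<le> \<phi> u * (2 * exp (2 * \<bar>y\<bar> * norm ?s + (norm ?s)\<^sup>2))"
    by (intro mult_left_mono norm_hermite_partial_sum_le) simp
  also have "\<dots> = 2 / sqrt (2 * pi) * exp (2 * \<bar>y\<bar> * norm ?s + (norm ?s)\<^sup>2 - 1 / 2 * u\<^sup>2)"
    unfolding mult.left_commute[of "\<phi> u"] std_normal_density_mult_exp by simp
  also have "\<dots> \<le> 2 / sqrt (2 * pi) * exp (2 * \<bar>y\<bar> * (\<bar>w\<bar> * (\<bar>x\<bar> + \<bar>u\<bar>)) + w\<^sup>2 * (x\<^sup>2 + u\<^sup>2 / 2) - 1 / 2 * u\<^sup>2)"
    unfolding norm_mehler_var_sq using norm_mehler_var_le[of w x u]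
    by (intro mult_left_mono exp_mono diff_right_mono add_right_mono) (auto intro: mult_left_mono)
  also have "\<dots> = 2 / sqrt (2 * pi) * exp (2 * \<bar>y\<bar> * \<bar>w\<bar> * \<bar>x\<bar> + w\<^sup>2 * x\<^sup>2)
       * exp (2 * \<bar>y\<bar> * \<bar>w\<bar> * \<bar>u\<bar> - (1 - w\<^sup>2) / 2 * u\<^sup>2)"
    unfolding mult.assoc exp_add[symmetric]
    by (rule arg_cong[where f = "\<lambda>e. 2 / sqrt (2 * pi) * exp e"]) (simp add: field_simps)
  finally show ?thesis .
qed

lemma integral_mehler_limit:
  assumes w2: "w\<^sup>2 < 1"
  shows "(LINT u|lborel. \<phi> u *\<^sub>R exp (2 * of_real y * mehler_var w x u - (mehler_var w x u)\<^sup>2))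
       = of_real (exp ((2 * x * y * w - (x\<^sup>2 + y\<^sup>2) * w\<^sup>2) / (1 - w\<^sup>2)) / sqrt (1 - w\<^sup>2))"
proof -
  define k where "k = w * sqrt 2 * (y - w * x)"
  define C where "C = 2 * w * x * y - w\<^sup>2 * x\<^sup>2"
  define q where "q = - (k\<^sup>2) / (4 * ((1 - w\<^sup>2) / 2))"
  have exponent: "2 * of_real y * mehler_var w x u - (mehler_var w x u)\<^sup>2 - of_real (1 / 2 * u\<^sup>2)
      = of_real C + ((\<i> * of_real k) * of_real u - of_real ((1 - w\<^sup>2) / 2 * u\<^sup>2))" for u
    by (simp add: mehler_var_def hermite_var_def C_def k_def complex_eq_iff power2_eq_square algebra_simps)
      (simp add: field_simps)
  have "(LINT u|lborel. \<phi> u *\<^sub>R exp (2 * of_real y * mehler_var w x u - (mehler_var w x u)\<^sup>2))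
      = of_real (exp C / sqrt (2 * pi)) * (of_real (sqrt (pi / ((1 - w\<^sup>2) / 2)))
          * exp ((\<i> * of_real k)\<^sup>2 / of_real (4 * ((1 - w\<^sup>2) / 2))))"
    unfolding std_normal_density_scaleR_exp exponent exp_add exp_of_real integral_mult_right_zero
    using w2 by (subst integral_exp_gaussian) simp_all
  also have "(\<i> * of_real k)\<^sup>2 / of_real (4 * ((1 - w\<^sup>2) / 2)) = (of_real q :: complex)"
    by (simp add: q_def power_mult_distrib)
  also have "of_real (exp C / sqrt (2 * pi)) * (of_real (sqrt (pi / ((1 - w\<^sup>2) / 2))) * exp (of_real q))
      = (of_real (exp (C + q) * (sqrt (pi / ((1 - w\<^sup>2) / 2)) / sqrt (2 * pi))) :: complex)"
    by (simp add: exp_add exp_of_real flip: of_real_mult)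
  also have "C + q = (2 * x * y * w - (x\<^sup>2 + y\<^sup>2) * w\<^sup>2) / (1 - w\<^sup>2)"
    using w2 by (simp add: q_def C_def k_def field_simps) (simp add: eval_nat_numeral algebra_simps)
  also have "sqrt (pi / ((1 - w\<^sup>2) / 2)) / sqrt (2 * pi) = 1 / sqrt (1 - w\<^sup>2)"
    using w2 by (simp add: real_sqrt_divide real_sqrt_mult field_simps)
  finally show ?thesis
    by simp
qed

lemma mehler_formula:
  fixes w x y :: real
  assumes w: "\<bar>w\<bar> < 1"
  shows "(\<lambda>n. (w / 2) ^ n / fact n * hermite n x * hermite n y)
           sums (exp ((2 * x * y * w - (x\<^sup>2 + y\<^sup>2) * w\<^sup>2) / (1 - w\<^sup>2)) / sqrt (1 - w\<^sup>2))"
proof -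
  have w2: "w\<^sup>2 < 1"
    using w by (simp add: abs_square_less_1)
  have "(\<lambda>n. of_real ((w / 2) ^ n / fact n * hermite n x * hermite n y))
      sums (LINT u|lborel. \<phi> u *\<^sub>R exp (2 * of_real y * mehler_var w x u - (mehler_var w x u)\<^sup>2))"
    unfolding integral_mehler_term[symmetric]
  proof (rule sums_integral_dominated[OF integrable_mehler_term _ norm_mehler_partial_sum_le])
    show "(\<lambda>n. \<phi> u *\<^sub>R ((mehler_var w x u ^ n * of_real (hermite n y)) /\<^sub>R fact n))
        sums (\<phi> u *\<^sub>R exp (2 * of_real y * mehler_var w x u - (mehler_var w x u)\<^sup>2))" for u
      by (intro sums_scaleR_right hermite_generating_function)
  qed (use w2 in \<open>intro integrable_mult_right integrable_exp_abs_minus_quadratic, simp\<close>)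
  then show ?thesis
    unfolding integral_mehler_limit[OF w2] sums_of_real_iff .
qed

section \<open>The three approximate GKP states\<close>

lemma normalize_wf_mult_of_real:
  assumes c: "c > 0"
  shows "normalize_wf (\<lambda>q. of_real c * \<psi> q) = normalize_wf \<psi>"
proof -
  have "(LINT x|lborel. (cmod (of_real c * \<psi> x))\<^sup>2) = c\<^sup>2 * (LINT x|lborel. (cmod (\<psi> x))\<^sup>2)"
    by (simp add: norm_mult power_mult_distrib)
  then have "sqrt (LINT x|lborel. (cmod (of_real c * \<psi> x))\<^sup>2) = c * sqrt (LINT x|lborel. (cmod (\<psi> x))\<^sup>2)"
    using c by (simp add: real_sqrt_mult)
  then show ?thesis
    using c by (simp add: normalize_wf_def)
qed

lemma integral_cmod_squeeze:
  "(LINT x|lborel. (cmod (squeeze \<xi> \<psi> x))\<^sup>2) = (LINT x|lborel. (cmod (\<psi> x))\<^sup>2)"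
proof -
  have "(cmod (squeeze \<xi> \<psi> x))\<^sup>2 = exp \<xi> * (cmod (\<psi> (exp \<xi> * x)))\<^sup>2" for x
  proof -
    have "(exp (\<xi> / 2))\<^sup>2 = exp \<xi>"
      by (simp flip: exp_of_nat_mult)
    then show ?thesis
      by (simp add: squeeze_def norm_mult power_mult_distrib)
  qed
  then have "(LINT x|lborel. (cmod (squeeze \<xi> \<psi> x))\<^sup>2) = \<bar>exp \<xi>\<bar> *\<^sub>R (LINT x|lborel. (cmod (\<psi> (0 + exp \<xi> * x)))\<^sup>2)"
    by simp
  also have "\<dots> = (LINT x|lborel. (cmod (\<psi> x))\<^sup>2)"
    by (rule lborel_integral_real_affine[symmetric]) simp
  finally show ?thesis .
qed

lemma squeeze_normalize_wf: "squeeze \<xi> (normalize_wf \<psi>) = normalize_wf (squeeze \<xi> \<psi>)"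
  by (simp add: normalize_wf_def integral_cmod_squeeze) (simp add: squeeze_def fun_eq_iff)

definition gkp_comb :: "nat \<Rightarrow> nat \<Rightarrow> (real \<Rightarrow> real \<Rightarrow> real) \<Rightarrow> wavefun" where
  "gkp_comb d j g = (\<lambda>q. infsum (\<lambda>s::int. complex_of_real (g q (gkp_pt d j s))) UNIV)"

lemma normalize_apply_to_ideal:
  assumes d: "d > 0" and c: "c > 0" and K: "\<And>q x. K q x = of_real (c * g q x)"
  shows "normalize_wf (apply_to_ideal K d j) = normalize_wf (gkp_comb d j g)"
proof -
  have eq: "apply_to_ideal K d j = (\<lambda>q. of_real (sqrt (alpha_d d * real d) * c) * gkp_comb d j g q)"
    by (simp add: apply_to_ideal_def gkp_comb_def K infsum_cmult_right' mult.assoc)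
  have "sqrt (alpha_d d * real d) * c > 0"
    using d c by (simp add: alpha_d_def)
  then show ?thesis
    unfolding eq by (rule normalize_wf_mult_of_real)
qed

lemma smeared_disp_integrand_eq:
  "of_real (exp (- r\<^sup>2 / (2 * \<gamma>\<^sup>2) - (q - x)\<^sup>2 / (2 * \<delta>\<^sup>2)) / (2 * pi * \<gamma> * \<delta>))
     * cis (- r * (q - x) / 2) * cis (r * q)
   = of_real (exp (- (q - x)\<^sup>2 / (2 * \<delta>\<^sup>2)) / (2 * pi * \<gamma> * \<delta>))
     * exp ((\<i> * of_real ((q + x) / 2)) * of_real r - of_real (1 / (2 * \<gamma>\<^sup>2) * r\<^sup>2))"
proof -
  define c where "c = \<i> * of_real ((q + x) / 2)"
  have angle: "- r * (q - x) / 2 + r * q = (q + x) / 2 * r"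
    by (simp add: field_simps)
  have phase: "cis (- r * (q - x) / 2) * cis (r * q) = exp (c * of_real r)"
    by (simp only: cis_mult angle) (simp add: cis_conv_exp c_def mult.assoc)
  have gauss: "exp (- r\<^sup>2 / (2 * \<gamma>\<^sup>2) - (q - x)\<^sup>2 / (2 * \<delta>\<^sup>2)) / (2 * pi * \<gamma> * \<delta>)
      = exp (- (q - x)\<^sup>2 / (2 * \<delta>\<^sup>2)) / (2 * pi * \<gamma> * \<delta>) * exp (- (1 / (2 * \<gamma>\<^sup>2) * r\<^sup>2))"
    by (simp add: exp_diff exp_minus field_simps)
  have split: "exp (c * of_real r - of_real (1 / (2 * \<gamma>\<^sup>2) * r\<^sup>2))
      = exp (c * of_real r) * of_real (exp (- (1 / (2 * \<gamma>\<^sup>2) * r\<^sup>2)))"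
    by (simp only: diff_conv_add_uminus exp_add of_real_minus[symmetric] exp_of_real)
  show ?thesis
    unfolding c_def[symmetric] gauss unfolding mult.assoc phase unfolding split unfolding of_real_mult
    by (simp only: ac_simps)
qed

lemma smeared_disp_kernel_gaussian:
  fixes \<gamma> \<delta> :: real
  assumes \<gamma>: "\<gamma> > 0" and \<delta>: "\<delta> > 0"
  shows "smeared_disp_kernel (\<lambda>r1 r2. of_real (exp (- r1\<^sup>2 / (2 * \<gamma>\<^sup>2) - r2\<^sup>2 / (2 * \<delta>\<^sup>2)) / (2 * pi * \<gamma> * \<delta>))) q x
       = of_real (1 / (\<delta> * sqrt (2 * pi)) * exp (- (q - x)\<^sup>2 / (2 * \<delta>\<^sup>2) - \<gamma>\<^sup>2 * (q + x)\<^sup>2 / 8))"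
proof -
  define K where "K = exp (- (q - x)\<^sup>2 / (2 * \<delta>\<^sup>2)) / (2 * pi * \<gamma> * \<delta>)"
  define a where "a = 1 / (2 * \<gamma>\<^sup>2)"
  define c where "c = \<i> * of_real ((q + x) / 2)"
  have "smeared_disp_kernel (\<lambda>r1 r2. of_real (exp (- r1\<^sup>2 / (2 * \<gamma>\<^sup>2) - r2\<^sup>2 / (2 * \<delta>\<^sup>2)) / (2 * pi * \<gamma> * \<delta>))) q x
      = of_real K * (of_real (sqrt (pi / a)) * exp (c\<^sup>2 / of_real (4 * a)))"
    unfolding smeared_disp_kernel_def smeared_disp_integrand_eq integral_mult_right_zero
      K_def[symmetric] a_def[symmetric] c_def[symmetric]
    using \<gamma> by (subst integral_exp_gaussian) (simp_all add: a_def)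
  also have "c\<^sup>2 / of_real (4 * a) = of_real (- \<gamma>\<^sup>2 * (q + x)\<^sup>2 / 8)"
  proof -
    have c2: "c\<^sup>2 = of_real (- ((q + x) / 2)\<^sup>2)"
      by (simp add: c_def power_mult_distrib power_divide)
    show ?thesis
      unfolding c2 of_real_divide[symmetric] using \<gamma> by (simp add: a_def field_simps)
  qed
  also have "of_real K * (of_real (sqrt (pi / a)) * exp (of_real (- \<gamma>\<^sup>2 * (q + x)\<^sup>2 / 8)))
      = (of_real (1 / (\<delta> * sqrt (2 * pi)) * exp (- (q - x)\<^sup>2 / (2 * \<delta>\<^sup>2) - \<gamma>\<^sup>2 * (q + x)\<^sup>2 / 8)) :: complex)"
  proof -
    have "sqrt (pi / a) = \<gamma> * sqrt (2 * pi)"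
      using \<gamma> by (simp add: a_def real_sqrt_mult real_sqrt_divide)
    moreover have "exp (- (q - x)\<^sup>2 / (2 * \<delta>\<^sup>2) - \<gamma>\<^sup>2 * (q + x)\<^sup>2 / 8)
        = exp (- (q - x)\<^sup>2 / (2 * \<delta>\<^sup>2)) * exp (- \<gamma>\<^sup>2 * (q + x)\<^sup>2 / 8)"
      by (simp add: mult_exp_exp)
    ultimately show ?thesis
      unfolding exp_of_real of_real_mult[symmetric]
      using \<gamma> \<delta> by (intro arg_cong[where f = of_real]) (simp add: K_def field_simps)
  qed
  finally show ?thesis .
qed

lemma gkp2_eq_normalize_comb:
  assumes "d > 0" "\<gamma> > 0" "\<delta> > 0"
  shows "gkp2 d j \<gamma> \<delta>
       = normalize_wf (gkp_comb d j (\<lambda>q x. exp (- (q - x)\<^sup>2 / (2 * \<delta>\<^sup>2) - \<gamma>\<^sup>2 * (q + x)\<^sup>2 / 8)))"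
  unfolding gkp2_def
proof (rule normalize_apply_to_ideal[where c = "1 / (\<delta> * sqrt (2 * pi))"])
  show "smeared_disp_kernel (\<lambda>r1 r2. of_real (exp (- r1\<^sup>2 / (2 * \<gamma>\<^sup>2) - r2\<^sup>2 / (2 * \<delta>\<^sup>2)) / (2 * pi * \<gamma> * \<delta>))) q x
      = of_real (1 / (\<delta> * sqrt (2 * pi)) * exp (- (q - x)\<^sup>2 / (2 * \<delta>\<^sup>2) - \<gamma>\<^sup>2 * (q + x)\<^sup>2 / 8))" for q x
    using assms(2,3) by (rule smeared_disp_kernel_gaussian)
qed (use assms in simp_all)

text \<open>With \<open>w = exp (-\<beta>)\<close> this is the Mehler kernel
  \<open>exp (-(coth \<beta>) (q\<^sup>2 + x\<^sup>2)/2 + q x / sinh \<beta>)\<close>.\<close>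
definition mehler_gauss :: "real \<Rightarrow> real \<Rightarrow> real \<Rightarrow> real" where
  "mehler_gauss w q x = exp (- (1 + w\<^sup>2) / (2 * (1 - w\<^sup>2)) * (q\<^sup>2 + x\<^sup>2) + 2 * w / (1 - w\<^sup>2) * q * x)"

lemma mehler_gauss_eq:
  assumes "w\<^sup>2 < 1"
  shows "exp (- q\<^sup>2 / 2) * exp (- x\<^sup>2 / 2) * exp ((2 * q * x * w - (q\<^sup>2 + x\<^sup>2) * w\<^sup>2) / (1 - w\<^sup>2))
       = mehler_gauss w q x"
proof -
  define D where "D = 1 - w\<^sup>2"
  have "D \<noteq> 0"
    using assms by (simp add: D_def)
  then have "- q\<^sup>2 / 2 + - x\<^sup>2 / 2 + (2 * q * x * w - (q\<^sup>2 + x\<^sup>2) * w\<^sup>2) / D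
      = - (1 + w\<^sup>2) / (2 * D) * (q\<^sup>2 + x\<^sup>2) + 2 * w / D * q * x"
    by (simp add: field_simps) (simp add: D_def algebra_simps)
  then show ?thesis
    unfolding mehler_gauss_def mult_exp_exp D_def by (rule arg_cong[where f = exp])
qed

lemma hermite_fun_mult:
  "hermite_fun n q * hermite_fun n x
   = hermite n q * hermite n x * exp (- q\<^sup>2 / 2) * exp (- x\<^sup>2 / 2) / (2 ^ n * fact n * sqrt pi)"
proof -
  have "sqrt (2 ^ n * fact n * sqrt pi) * sqrt (2 ^ n * fact n * sqrt pi) = 2 ^ n * fact n * sqrt pi"
    by simp
  then show ?thesis
    unfolding hermite_fun_def by (simp only: times_divide_times_eq ac_simps)
qed

lemma number_exp_kernel_eq_mehler_gauss:
  assumes "\<beta> > 0"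
  shows "number_exp_kernel \<beta> q x
       = of_real (exp (- \<beta> / 2) / sqrt (pi * (1 - (exp (- \<beta>))\<^sup>2)) * mehler_gauss (exp (- \<beta>)) q x)"
proof -
  define w where "w = exp (- \<beta>)"
  have w: "0 < w" "w < 1" "w\<^sup>2 < 1"
    using assms by (simp_all add: w_def power_less_one_iff)
  define C where "C = exp (- \<beta> / 2) * exp (- q\<^sup>2 / 2) * exp (- x\<^sup>2 / 2) / sqrt pi"
  have summand: "exp (- \<beta> * (real n + 1 / 2)) * hermite_fun n q * hermite_fun n x
      = C * ((w / 2) ^ n / fact n * hermite n q * hermite n x)" for n
  proof -
    have "exp (- \<beta> * (real n + 1 / 2)) = exp (- \<beta> / 2) * w ^ n"
      by (simp add: w_def algebra_simps flip: exp_of_nat_mult exp_add)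
    then have "exp (- \<beta> * (real n + 1 / 2)) * hermite_fun n q * hermite_fun n x
        = exp (- \<beta> / 2) * w ^ n * (hermite n q * hermite n x * exp (- q\<^sup>2 / 2) * exp (- x\<^sup>2 / 2)
          / (2 ^ n * fact n * sqrt pi))"
      by (simp only: mult.assoc hermite_fun_mult)
    also have "\<dots> = C * ((w / 2) ^ n / fact n * hermite n q * hermite n x)"
      by (simp add: C_def field_simps)
    finally show ?thesis .
  qed
  have "(\<lambda>n. exp (- \<beta> * (real n + 1 / 2)) * hermite_fun n q * hermite_fun n x)
      sums (C * (exp ((2 * q * x * w - (q\<^sup>2 + x\<^sup>2) * w\<^sup>2) / (1 - w\<^sup>2)) / sqrt (1 - w\<^sup>2)))"
    unfolding summand using w by (intro sums_mult mehler_formula) simp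
  moreover have "C * (exp ((2 * q * x * w - (q\<^sup>2 + x\<^sup>2) * w\<^sup>2) / (1 - w\<^sup>2)) / sqrt (1 - w\<^sup>2))
      = exp (- \<beta> / 2) / sqrt (pi * (1 - w\<^sup>2)) * mehler_gauss w q x"
    using mehler_gauss_eq[OF w(3), of q x] by (simp add: C_def field_simps flip: real_sqrt_mult)
  ultimately show ?thesis
    unfolding number_exp_kernel_def w_def by (simp add: sums_iff)
qed

lemma gkp3_eq_normalize_comb:
  assumes "d > 0" "\<beta> > 0"
  shows "gkp3 d j \<beta> = normalize_wf (gkp_comb d j (mehler_gauss (exp (- \<beta>))))"
proof -
  have "(exp (- \<beta>))\<^sup>2 < 1"
    using assms(2) by (simp add: power_less_one_iff)
  then show ?thesis
    unfolding gkp3_def using assms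
    by (intro normalize_apply_to_ideal[where c = "exp (- \<beta> / 2) / sqrt (pi * (1 - (exp (- \<beta>))\<^sup>2))"]
        number_exp_kernel_eq_mehler_gauss) simp_all
qed

lemma squeeze_gkp1_eq_normalize_comb:
  assumes \<Delta>: "\<Delta> > 0"
  shows "squeeze \<xi> (gkp1 d j \<kappa> \<Delta>)
       = normalize_wf (gkp_comb d j (\<lambda>q x. exp (- \<kappa>\<^sup>2 * x\<^sup>2 / 2 - (exp \<xi> * q - x)\<^sup>2 / (2 * \<Delta>\<^sup>2))))"
    (is "_ = normalize_wf (gkp_comb d j ?g)")
proof -
  define R where "R q = infsum (\<lambda>s::int. of_real (exp (- (\<kappa>\<^sup>2 * (gkp_pt d j s)\<^sup>2) / 2))
      * shiftX (gkp_pt d j s) (squeeze (- ln \<Delta>) vac) q) UNIV" for q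
  define K where "K = exp (- ln \<Delta> / 2) * pi powr (- 1 / 4)"
  have summand: "of_real (exp (- (\<kappa>\<^sup>2 * y\<^sup>2) / 2)) * shiftX y (squeeze (- ln \<Delta>) vac) (exp \<xi> * q)
      = of_real K * of_real (?g q y)" for q y
  proof -
    have "exp (- (\<kappa>\<^sup>2 * y\<^sup>2) / 2) * exp (- (1 / \<Delta> * (exp \<xi> * q - y))\<^sup>2 / 2) = ?g q y"
      unfolding mult_exp_exp using \<Delta> by (simp add: field_simps)
    moreover have "exp (- ln \<Delta>) = 1 / \<Delta>"
      using \<Delta> by (simp add: exp_minus inverse_eq_divide)
    ultimately show ?thesis
      unfolding shiftX_def squeeze_def vac_def K_def of_real_mult[symmetric] by (simp only: ac_simps)
  qed
  have squeeze_R: "squeeze \<xi> R = (\<lambda>q. of_real (exp (\<xi> / 2) * K) * gkp_comb d j ?g q)"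
  proof
    fix q
    have "R (exp \<xi> * q) = of_real K * gkp_comb d j ?g q"
      unfolding R_def gkp_comb_def summand by (rule infsum_cmult_right')
    then show "squeeze \<xi> R q = of_real (exp (\<xi> / 2) * K) * gkp_comb d j ?g q"
      by (simp add: squeeze_def)
  qed
  have "exp (\<xi> / 2) * K > 0"
    by (simp add: K_def)
  then show ?thesis
    unfolding gkp1_def R_def[symmetric] squeeze_normalize_wf squeeze_R by (rule normalize_wf_mult_of_real)
qed

lemma smeared_gauss_eq_mehler_gauss:
  fixes w \<gamma> \<delta> :: real
  assumes w: "0 < w" "w < 1"
    and \<gamma>: "\<gamma>\<^sup>2 = 2 * (1 - w) / (1 + w)" and \<delta>: "\<delta>\<^sup>2 = 2 * (1 - w) / (1 + w)"
  shows "(\<lambda>q x. exp (- (q - x)\<^sup>2 / (2 * \<delta>\<^sup>2) - \<gamma>\<^sup>2 * (q + x)\<^sup>2 / 8)) = mehler_gauss w"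
proof (intro ext)
  fix q x :: real
  define a b where "a = 1 - w" and "b = 1 + w"
  have factor: "1 - w\<^sup>2 = a * b"
    by (simp add: a_def b_def power2_eq_square algebra_simps)
  have "a \<noteq> 0" "b \<noteq> 0"
    using w by (simp_all add: a_def b_def)
  then show "exp (- (q - x)\<^sup>2 / (2 * \<delta>\<^sup>2) - \<gamma>\<^sup>2 * (q + x)\<^sup>2 / 8) = mehler_gauss w q x"
    unfolding mehler_gauss_def \<gamma> \<delta> factor a_def[symmetric] b_def[symmetric]
    by (intro arg_cong[where f = exp]) (simp add: field_simps, simp add: a_def b_def power2_eq_square algebra_simps)
qed

lemma squeezed_gauss_eq_mehler_gauss:
  fixes w \<kappa> \<Delta> :: real
  assumes w: "0 < w" "w < 1"
    and \<kappa>: "\<kappa>\<^sup>2 = (1 - w\<^sup>2) / (1 + w\<^sup>2)" and \<Delta>: "\<Delta>\<^sup>2 = (1 - w\<^sup>2) * (1 + w\<^sup>2) / (4 * w\<^sup>2)"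
  shows "(\<lambda>q x. exp (- \<kappa>\<^sup>2 * x\<^sup>2 / 2 - ((1 + w\<^sup>2) / (2 * w) * q - x)\<^sup>2 / (2 * \<Delta>\<^sup>2))) = mehler_gauss w"
proof (intro ext)
  fix q x :: real
  define a b c where "a = 1 - w" and "b = 1 + w" and "c = 1 + w\<^sup>2"
  have factor: "1 - w\<^sup>2 = a * b"
    by (simp add: a_def b_def power2_eq_square algebra_simps)
  have "c > 0"
    unfolding c_def by (intro add_pos_nonneg) simp_all
  moreover have "a \<noteq> 0" "b \<noteq> 0" "w \<noteq> 0"
    using w by (simp_all add: a_def b_def)
  ultimately show "exp (- \<kappa>\<^sup>2 * x\<^sup>2 / 2 - ((1 + w\<^sup>2) / (2 * w) * q - x)\<^sup>2 / (2 * \<Delta>\<^sup>2)) = mehler_gauss w q x"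
    unfolding mehler_gauss_def \<kappa> \<Delta> factor c_def[symmetric]
    by (intro arg_cong[where f = exp]) (simp add: field_simps, simp add: a_def b_def c_def power2_eq_square algebra_simps)
qed

lemma gkp2_eq_mehler_comb:
  assumes "d > 0" and w: "0 < w" "w < 1" and "\<gamma> > 0" "\<delta> > 0"
    and "\<gamma>\<^sup>2 = 2 * (1 - w) / (1 + w)" "\<delta>\<^sup>2 = 2 * (1 - w) / (1 + w)"
  shows "gkp2 d j \<gamma> \<delta> = normalize_wf (gkp_comb d j (mehler_gauss w))"
  by (simp only: gkp2_eq_normalize_comb[OF assms(1,4,5)] smeared_gauss_eq_mehler_gauss[OF w assms(6,7)])

lemma squeeze_gkp1_eq_mehler_comb:
  assumes w: "0 < w" "w < 1" and "\<Delta> > 0"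
    and "\<kappa>\<^sup>2 = (1 - w\<^sup>2) / (1 + w\<^sup>2)" "\<Delta>\<^sup>2 = (1 - w\<^sup>2) * (1 + w\<^sup>2) / (4 * w\<^sup>2)"
  shows "squeeze (ln ((1 + w\<^sup>2) / (2 * w))) (gkp1 d j \<kappa> \<Delta>) = normalize_wf (gkp_comb d j (mehler_gauss w))"
proof -
  have "1 + w\<^sup>2 > 0"
    by (intro add_pos_nonneg) simp_all
  then have "exp (ln ((1 + w\<^sup>2) / (2 * w))) = (1 + w\<^sup>2) / (2 * w)"
    using w by simp
  then show ?thesis
    by (simp only: squeeze_gkp1_eq_normalize_comb[OF assms(3)] squeezed_gauss_eq_mehler_gauss[OF w assms(4,5)])
qed

lemma hyperbolic_exp_minus:
  fixes \<beta> :: real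
  defines "w \<equiv> exp (- \<beta>)"
  shows "tanh \<beta> = (1 - w\<^sup>2) / (1 + w\<^sup>2)" and "tanh (\<beta> / 2) = (1 - w) / (1 + w)"
    and "sinh \<beta> * cosh \<beta> = (1 - w\<^sup>2) * (1 + w\<^sup>2) / (4 * w\<^sup>2)" and "cosh \<beta> = (1 + w\<^sup>2) / (2 * w)"
proof -
  have w2: "exp (- 2 * \<beta>) = w\<^sup>2"
    by (simp add: w_def flip: exp_of_nat_mult)
  show "tanh \<beta> = (1 - w\<^sup>2) / (1 + w\<^sup>2)"
    unfolding tanh_real_altdef w2 ..
  show "tanh (\<beta> / 2) = (1 - w) / (1 + w)"
    by (simp add: tanh_real_altdef w_def)
  have e: "exp \<beta> = 1 / w"
    by (simp add: w_def exp_minus divide_inverse)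
  show "cosh \<beta> = (1 + w\<^sup>2) / (2 * w)"
    by (simp add: cosh_def e w_def field_simps power2_eq_square)
  show "sinh \<beta> * cosh \<beta> = (1 - w\<^sup>2) * (1 + w\<^sup>2) / (4 * w\<^sup>2)"
    by (simp add: sinh_def cosh_def e w_def field_simps power2_eq_square)
qed

theorem theorem1:
  fixes d j :: nat and \<beta> \<kappa> \<Delta> \<gamma> \<delta> :: real
  assumes "d \<ge> 1" and "j < d" and "\<beta> > 0"
    and "\<kappa> > 0" and "\<Delta> > 0" and "\<gamma> > 0" and "\<delta> > 0"
    and "\<kappa>\<^sup>2 = \<gamma>\<^sup>2 / lam \<gamma> \<delta>" and "\<gamma>\<^sup>2 / lam \<gamma> \<delta> = tanh \<beta>"
    and "\<Delta>\<^sup>2 = \<delta>\<^sup>2 / lam \<gamma> \<delta> / (1 - \<gamma>\<^sup>2 * \<delta>\<^sup>2 / (2 * lam \<gamma> \<delta>))\<^sup>2"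
    and "\<delta>\<^sup>2 / lam \<gamma> \<delta> / (1 - \<gamma>\<^sup>2 * \<delta>\<^sup>2 / (2 * lam \<gamma> \<delta>))\<^sup>2 = sinh \<beta> * cosh \<beta>"
    and "\<gamma>\<^sup>2 = \<delta>\<^sup>2" and "\<delta>\<^sup>2 = 2 * tanh (\<beta> / 2)"
  shows "squeeze (ln (sqrt (1 + \<kappa>\<^sup>2 * \<Delta>\<^sup>2))) (gkp1 d j \<kappa> \<Delta>) = gkp2 d j \<gamma> \<delta>
       \<and> gkp2 d j \<gamma> \<delta> = gkp3 d j \<beta>"
proof -
  define w where "w = exp (- \<beta>)"
  have w: "0 < w" "w < 1"
    using \<open>\<beta> > 0\<close> by (simp_all add: w_def)
  note hyp = hyperbolic_exp_minus[of \<beta>, folded w_def]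
  have \<kappa>: "\<kappa>\<^sup>2 = tanh \<beta>" and \<Delta>: "\<Delta>\<^sup>2 = sinh \<beta> * cosh \<beta>"
    and \<gamma>: "\<gamma>\<^sup>2 = 2 * tanh (\<beta> / 2)" and \<delta>: "\<delta>\<^sup>2 = 2 * tanh (\<beta> / 2)"
    using assms(8-13) by simp_all
  have "1 + \<kappa>\<^sup>2 * \<Delta>\<^sup>2 = (cosh \<beta>)\<^sup>2"
    unfolding \<kappa> \<Delta> tanh_def using cosh_square_eq[of \<beta>] by (simp add: power2_eq_square)
  then have "sqrt (1 + \<kappa>\<^sup>2 * \<Delta>\<^sup>2) = (1 + w\<^sup>2) / (2 * w)"
    by (simp add: hyp(4)[symmetric])
  then have "squeeze (ln (sqrt (1 + \<kappa>\<^sup>2 * \<Delta>\<^sup>2))) (gkp1 d j \<kappa> \<Delta>) = normalize_wf (gkp_comb d j (mehler_gauss w))"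
    using w \<open>\<Delta> > 0\<close> by (simp add: squeeze_gkp1_eq_mehler_comb \<kappa> \<Delta> hyp(1,3))
  moreover have "gkp2 d j \<gamma> \<delta> = normalize_wf (gkp_comb d j (mehler_gauss w))"
    using assms(1,6,7) w by (intro gkp2_eq_mehler_comb) (simp_all add: \<gamma> \<delta> hyp(2))
  moreover have "gkp3 d j \<beta> = normalize_wf (gkp_comb d j (mehler_gauss w))"
    unfolding w_def using assms(1,3) by (intro gkp3_eq_normalize_comb) simp_all
  ultimately show ?thesis
    by simp
qed

end
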